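(* Let $n,m\in\mathbb N$ with $n<m$, and let $\mathbb P^T_n=\{p^{(k)}_n:k\in\mathbb N\}$, $\mathbb P^T_m=\{p^{(k)}_m:k\in\mathbb N\}$. Then $\mathbb P^T_n\cap\mathbb P^T_m\neq\emptyset$ if and only if $m\in\mathbb P^T_n$. Moreover, if $m\in\mathbb P^T_n$, say $m=p^{(k)}_n$, then $\mathbb P^T_m\subset\mathbb P^T_n$ and $\mathbb P^T_n\setminus\mathbb P^T_m=\{p^{(1)}_n,p^{(2)}_n,\dots,p^{(k)}_n\}$.
   Context: Let $p_n$ denote the $n$-th prime number. Define $p^{(0)}_n=n$ and recursively $p^{(k+1)}_n=p_{p^{(k)}_n}$ for $k\in\mathbb N_0$. *)

theory Defs
  imports "HOL-Computational_Algebra.Primes" "HOL-Library.Infinite_Set"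
begin

text \<open>The n-th prime, 1-indexed: nth_prime 1 = 2, nth_prime 2 = 3, ...
  (the value at 0 is irrelevant).\<close>
definition nth_prime :: "nat \<Rightarrow> nat" where
  "nth_prime n = enumerate {p::nat. prime p} (n - 1)"

definition PT :: "nat \<Rightarrow> nat set" where
  "PT n = {(nth_prime ^^ k) n | k. k \<ge> 1}"

end

theory Submission
  imports Defs
begin

(* Only two properties of n |-> p_n are used: n < p_n, and injectivity on the positive
   integers. They make k |-> p^(k)_n strictly increasing, so the orbit of n is a faithful
   copy of {1..} and the orbit of m = p^(k)_n is the copy of {k<..}; this gives the inclusion
   and the difference. If two orbits meet, p^(a)_n = p^(b)_m, then cancelling b steps by
   injectivity leaves p^(a-b)_n = m when b <= a, while a < b would force n = p^(b-a)_m > m. *)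

locale inflationary_injection =
  fixes f :: "nat \<Rightarrow> nat"
  assumes less_self: "x < f x"
    and inj_on_positive: "inj_on f {1..}"
begin

definition forward_orbit :: "nat \<Rightarrow> nat set" where
  "forward_orbit x = (\<lambda>k. (f ^^ k) x) ` {1..}"

lemma strict_mono_funpow: "strict_mono (\<lambda>k. (f ^^ k) x)"
  unfolding strict_mono_Suc_iff by (simp add: less_self)

lemma inj_funpow: "inj (\<lambda>k. (f ^^ k) x)"
  using strict_mono_funpow by (rule strict_mono_imp_inj_on)

lemma less_funpow: "0 < k \<Longrightarrow> x < (f ^^ k) x"
  using strict_mono_funpow[of x] by (metis funpow_0 strict_monoD)

lemma funpow_positive: "1 \<le> x \<Longrightarrow> 1 \<le> (f ^^ k) x"
  using less_funpow[of k x] by (cases "k = 0") auto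

lemma inj_on_funpow_positive: "inj_on (f ^^ k) {1..}"
proof (induction k)
  case 0
  then show ?case by simp
next
  case (Suc k)
  have "f ` {1..} \<subseteq> {1..}"
    using funpow_positive[of _ 1] by auto
  with Suc.IH have "inj_on (f ^^ k \<circ> f) {1..}"
    using inj_on_positive by (blast intro: comp_inj_on inj_on_subset)
  then show ?case
    by (simp add: funpow_Suc_right comp_def del: funpow.simps)
qed

lemma forward_orbit_funpow: "forward_orbit ((f ^^ k) x) = (\<lambda>i. (f ^^ i) x) ` {k<..}"
proof -
  have "(f ^^ i) ((f ^^ k) x) = (f ^^ (k + i)) x" for i
    by (metis add.commute comp_apply funpow_add)
  then have "forward_orbit ((f ^^ k) x) = (\<lambda>i. (f ^^ i) x) ` plus k ` {1..}"
    by (simp only: forward_orbit_def image_image)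
  also have "plus k ` {1..} = {k<..}"
    by (simp only: image_add_atLeast) (simp add: atLeast_Suc_greaterThan)
  finally show ?thesis .
qed

lemma forward_orbits_meet_iff:
  assumes "1 \<le> n" and "n < m"
  shows "forward_orbit n \<inter> forward_orbit m \<noteq> {} \<longleftrightarrow> m \<in> forward_orbit n"
proof
  assume "forward_orbit n \<inter> forward_orbit m \<noteq> {}"
  then obtain a b where meet: "(f ^^ a) n = (f ^^ b) m"
    by (auto simp: forward_orbit_def)
  show "m \<in> forward_orbit n"
  proof (cases "b \<le> a")
    case True
    then obtain d where "a = b + d"
      using le_Suc_ex by blast
    with meet have "(f ^^ b) ((f ^^ d) n) = (f ^^ b) m"
      by (simp add: funpow_add)
    then have "(f ^^ d) n = m"
      by (rule inj_onD[OF inj_on_funpow_positive]) (use funpow_positive assms in auto)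
    moreover from this have "d \<noteq> 0"
      using \<open>n < m\<close> by (metis funpow_0 less_irrefl)
    ultimately show ?thesis
      by (auto simp: forward_orbit_def)
  next
    case False
    then obtain d where "b = a + d" and "0 < d"
      using less_imp_add_positive by (metis not_le)
    with meet have "(f ^^ a) n = (f ^^ a) ((f ^^ d) m)"
      by (simp add: funpow_add)
    then have "n = (f ^^ d) m"
      by (rule inj_onD[OF inj_on_funpow_positive]) (use funpow_positive assms in auto)
    with less_funpow[OF \<open>0 < d\<close>, of m] \<open>n < m\<close> show ?thesis
      by linarith
  qed
next
  assume "m \<in> forward_orbit n"
  then have "f m \<in> forward_orbit n"
    by (auto simp: forward_orbit_def image_iff intro!: bexI[where x = "Suc _"])
  moreover have "f m \<in> forward_orbit m"
    by (auto simp: forward_orbit_def image_iff intro!: bexI[where x = 1])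
  ultimately show "forward_orbit n \<inter> forward_orbit m \<noteq> {}"
    by blast
qed

lemma forward_orbit_funpow_psubset:
  assumes "1 \<le> k"
  shows "forward_orbit ((f ^^ k) x) \<subset> forward_orbit x"
proof -
  have "{k<..} \<subset> {1::nat..}"
    using assms by auto
  with inj_funpow have "(\<lambda>i. (f ^^ i) x) ` {k<..} \<subset> (\<lambda>i. (f ^^ i) x) ` {1..}"
    by (rule image_strict_mono[OF inj_on_subset, OF _ subset_UNIV])
  then show ?thesis
    unfolding forward_orbit_funpow unfolding forward_orbit_def .
qed

lemma forward_orbit_diff_funpow:
  "forward_orbit x - forward_orbit ((f ^^ k) x) = (\<lambda>j. (f ^^ j) x) ` {1..k}"
proof -
  have "{1..} - {k<..} = {1..k}"
    by auto
  then show ?thesis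
    unfolding forward_orbit_funpow unfolding forward_orbit_def
    by (simp only: image_set_diff[OF inj_funpow, symmetric])
qed

end

lemma enumerate_primes_ge: "i + 2 \<le> enumerate {p::nat. prime p} i"
proof (induction i)
  case 0
  show ?case
    using enumerate_in_set[OF primes_infinite, of 0] by (auto dest: prime_ge_2_nat)
next
  case (Suc i)
  then show ?case
    using enumerate_step[OF primes_infinite, of i] by simp
qed

lemma less_nth_prime: "x < nth_prime x"
  using enumerate_primes_ge[of "x - 1"] by (simp add: nth_prime_def)

lemma inj_on_nth_prime: "inj_on nth_prime {1..}"
  by (rule inj_onI) (auto simp: nth_prime_def dest: injD[OF inj_enumerate[OF primes_infinite]])

interpretation nth_prime: inflationary_injection nth_prime
  by unfold_locales (fact less_nth_prime, fact inj_on_nth_prime)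

lemma PT_eq_forward_orbit: "PT n = nth_prime.forward_orbit n"
  by (auto simp: PT_def nth_prime.forward_orbit_def)

theorem theorem5:
  fixes n m :: nat
  assumes "1 \<le> n" and "n < m"
  shows "(PT n \<inter> PT m \<noteq> {} \<longleftrightarrow> m \<in> PT n) \<and>
         (\<forall>k\<ge>1. m = (nth_prime ^^ k) n \<longrightarrow>
            PT m \<subset> PT n \<and>
            PT n - PT m = {(nth_prime ^^ j) n | j. 1 \<le> j \<and> j \<le> k})"
proof (intro conjI allI impI)
  show "PT n \<inter> PT m \<noteq> {} \<longleftrightarrow> m \<in> PT n"
    unfolding PT_eq_forward_orbit using assms by (rule nth_prime.forward_orbits_meet_iff)
next
  fix k :: nat
  assume "1 \<le> k" and m: "m = (nth_prime ^^ k) n"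
  show "PT m \<subset> PT n"
    unfolding PT_eq_forward_orbit m using \<open>1 \<le> k\<close> by (rule nth_prime.forward_orbit_funpow_psubset)
  show "PT n - PT m = {(nth_prime ^^ j) n | j. 1 \<le> j \<and> j \<le> k}"
    unfolding PT_eq_forward_orbit m nth_prime.forward_orbit_diff_funpow by auto
qed

end
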